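(* Let $E$ be a finite set with $|E|=n\ge1$, and consider the Boolean lattice of all subsets of $E$ with rank $\mathrm{rk}(F)=|F|$. Then, summing over chains of subsets that end at $E$, \[d_n(x)=\sum_{\varnothing=F_0\subsetneq F_1\subsetneq\cdots\subsetneq F_m=E}\ \prod_{i=1}^m\frac{x\bigl(1-x^{\mathrm{rk}(F_i)-\mathrm{rk}(F_{i-1})-1}\bigr)}{1-x},\] the sum over all $m\ge1$ and all such chains, and \[xA_n(x)=\sum_{F_0\subsetneq F_1\subsetneq\cdots\subsetneq F_m=E}\frac{x(1-x^{\mathrm{rk}(F_0)})}{1-x}\prod_{i=1}^m\frac{x\bigl(1-x^{\mathrm{rk}(F_i)-\mathrm{rk}(F_{i-1})-1}\bigr)}{1-x},\] the sum over all $m\ge0$ and all chains of subsets $F_0\subsetneq\cdots\subsetneq F_m=E$ (with $F_0$ arbitrary).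
   Context: Eulerian polynomials: $A_n(x)=\sum_{\sigma\in\mathfrak{S}_n}x^{\mathrm{des}(\sigma)}$ for $n\ge1$, with $\mathrm{des}(\sigma)=|\{i\in[n-1]:\sigma_i>\sigma_{i+1}\}|$. Derangement polynomials: $d_n(x)=\sum_{\sigma}x^{\mathrm{exc}(\sigma)}$ for $n\ge1$, the sum over fixed-point-free $\sigma\in\mathfrak{S}_n$, with $\mathrm{exc}(\sigma)=|\{i:\sigma_i>i\}|$. An empty product equals $1$. *)

theory Defs
  imports Complex_Main "HOL-Combinatorics.Permutations"
begin

definition des :: "nat \<Rightarrow> (nat \<Rightarrow> nat) \<Rightarrow> nat" where
  "des n \<sigma> = card {i \<in> {1..<n}. \<sigma> i > \<sigma> (Suc i)}"

definition exc :: "nat \<Rightarrow> (nat \<Rightarrow> nat) \<Rightarrow> nat" where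
  "exc n \<sigma> = card {i \<in> {1..n}. \<sigma> i > i}"

definition eulerian_poly :: "nat \<Rightarrow> real \<Rightarrow> real" where
  "eulerian_poly n x = (\<Sum>\<sigma> \<in> {\<sigma>. \<sigma> permutes {1..n}}. x ^ des n \<sigma>)"

definition derangement_poly :: "nat \<Rightarrow> real \<Rightarrow> real" where
  "derangement_poly n x =
     (\<Sum>\<sigma> \<in> {\<sigma>. \<sigma> permutes {1..n} \<and> (\<forall>i\<in>{1..n}. \<sigma> i \<noteq> i)}. x ^ exc n \<sigma>)"

definition chains_to :: "'a set \<Rightarrow> 'a set list set" where
  "chains_to E = {Fs. Fs \<noteq> [] \<and> sorted_wrt (\<subset>) Fs \<and> last Fs = E}"

definition chain_weight :: "real \<Rightarrow> 'a set list \<Rightarrow> real" where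
  "chain_weight x Fs =
     (\<Prod>i\<in>{1..length Fs - 1}.
        x * (1 - x ^ (card (Fs ! i) - card (Fs ! (i - 1)) - 1)) / (1 - x))"

end

theory Submission
  imports
    Defs
    "HOL-Computational_Algebra.Formal_Power_Series"
    "HOL-Combinatorics.Cycles"
    "HOL-Combinatorics.Multiset_Permutations"
begin

unbundle fps_syntax

text \<open>
  Both identities are proved by comparing exponential generating functions. Let
  \<open>D = e\<^sup>x\<^sup>t - x e\<^sup>t\<close>. Splitting a linear order at its largest letter shows that the egf
  \<open>A\<close> of the Eulerian polynomials (with \<open>A\<^sub>0 = 1\<close>) satisfies \<open>A' = A ((1 - x) + x A)\<close>,
  whence \<open>A = (1 - x) e\<^sup>t / D\<close>; splitting off the cycle through the largest point shows that the
  egf \<open>d\<close> of the derangement polynomials satisfies \<open>d' = x (A - 1) d\<close>, whence \<open>d = (1 - x) / D\<close>.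
  On the other side, removing the top set \<open>E\<close> from a chain turns a chain sum \<open>S\<close> into the
  convolution \<open>S = B + S F\<close>, where \<open>F\<close> is the egf of the weight \<open>x (1 - x\<^sup>k\<^sup>-\<^sup>1) / (1 - x)\<close> of a
  single step of rank \<open>k\<close>. The two chain sums of the statement have \<open>B = 1\<close> and \<open>B = F'\<close>, and
  solving these linear equations gives \<open>d\<close> and \<open>x (A - 1)\<close>.
\<close>

section \<open>Descents and ascents of lists\<close>

fun adjacent_count :: "('a \<Rightarrow> 'a \<Rightarrow> bool) \<Rightarrow> 'a list \<Rightarrow> nat" where
  "adjacent_count R (a # b # xs) = (if R a b then 1 else 0) + adjacent_count R (b # xs)"
| "adjacent_count R _ = 0"

abbreviation descents :: "'a::linorder list \<Rightarrow> nat" where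
  "descents \<equiv> adjacent_count (\<lambda>a b. b < a)"

abbreviation ascents :: "'a::linorder list \<Rightarrow> nat" where
  "ascents \<equiv> adjacent_count (<)"

lemma adjacent_count_Cons:
  "adjacent_count R (y # ys) = (if ys \<noteq> [] \<and> R y (hd ys) then 1 else 0) + adjacent_count R ys"
  by (cases ys) auto

lemma adjacent_count_append:
  "adjacent_count R (xs @ ys) =
     adjacent_count R xs + (if xs \<noteq> [] \<and> ys \<noteq> [] \<and> R (last xs) (hd ys) then 1 else 0) + adjacent_count R ys"
  by (induction R xs rule: adjacent_count.induct) (simp_all add: adjacent_count_Cons)

lemma adjacent_count_rev: "adjacent_count R (rev xs) = adjacent_count (\<lambda>a b. R b a) xs"
  by (induction xs) (simp_all add: adjacent_count_append adjacent_count_Cons last_rev)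

lemma card_Collect_nat_split:
  assumes "finite {k. P (Suc k)}"
  shows "card {k. P k} = (if P 0 then 1 else 0) + card {k. P (Suc k)}"
proof -
  have "{k. P k} = {k. k = 0 \<and> P 0} \<union> Suc ` {k. P (Suc k)}"
    by (auto simp: image_iff) (metis not0_implies_Suc)+
  moreover have "card ({k. k = 0 \<and> P 0} \<union> Suc ` {k. P (Suc k)}) =
      (if P 0 then 1 else 0) + card {k. P (Suc k)}"
    using assms by (subst card_Un_disjoint) (auto simp: card_image)
  ultimately show ?thesis by simp
qed

lemma adjacent_count_eq_card:
  "adjacent_count R xs = card {k. Suc k < length xs \<and> R (xs ! k) (xs ! Suc k)}"
proof (induction R xs rule: adjacent_count.induct)
  case (1 R a b xs)
  then show ?case
    by (subst card_Collect_nat_split) (auto intro: finite_subset[of _ "{..<length xs}"])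
qed auto

lemma descents_append_greatest:
  assumes "\<forall>z\<in>set xs. z < m"
  shows "descents (xs @ m # ys) = descents xs + descents (m # ys)"
proof -
  have "xs = [] \<or> last xs < m"
    using assms last_in_set by blast
  then show ?thesis
    by (auto simp: adjacent_count_append)
qed

lemma bij_betw_map_permutes:
  assumes "distinct xs"
  shows "bij_betw (\<lambda>\<sigma>. map \<sigma> xs) {\<sigma>. \<sigma> permutes set xs} (permutations_of_set (set xs))"
proof -
  let ?f = "\<lambda>\<sigma>. map \<sigma> xs"
  have inj: "inj_on ?f {\<sigma>. \<sigma> permutes set xs}"
  proof (rule inj_onI, rule ext)
    fix \<sigma> \<tau> y
    assume "\<sigma> \<in> {\<sigma>. \<sigma> permutes set xs}" "\<tau> \<in> {\<sigma>. \<sigma> permutes set xs}" "?f \<sigma> = ?f \<tau>"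
    then show "\<sigma> y = \<tau> y"
      by (cases "y \<in> set xs") (auto simp: permutes_not_in map_eq_conv)
  qed
  have "?f \<sigma> \<in> permutations_of_set (set xs)" if "\<sigma> permutes set xs" for \<sigma>
  proof -
    have "?f \<sigma> \<in> map \<sigma> ` permutations_of_set (set xs)"
      using assms by auto
    then show ?thesis
      unfolding permutations_of_set_image_permutes[OF that] .
  qed
  then have "?f ` {\<sigma>. \<sigma> permutes set xs} \<subseteq> permutations_of_set (set xs)"
    by auto
  moreover have "card (?f ` {\<sigma>. \<sigma> permutes set xs}) = card (permutations_of_set (set xs))"
    using assms by (simp add: card_image[OF inj] card_permutations distinct_card)
  ultimately show ?thesis
    using inj by (simp add: bij_betw_def card_subset_eq)
qed

lemma des_eq_descents: "des n \<sigma> = descents (map \<sigma> [1..<Suc n])"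
proof -
  have "descents (map \<sigma> [1..<Suc n]) = card {k. Suc k < n \<and> \<sigma> (Suc (Suc k)) < \<sigma> (Suc k)}"
    unfolding adjacent_count_eq_card by (rule arg_cong[where f = card]) (auto simp del: upt_Suc)
  moreover have "{i \<in> {1..<n}. \<sigma> (Suc i) < \<sigma> i} = Suc ` {k. Suc k < n \<and> \<sigma> (Suc (Suc k)) < \<sigma> (Suc k)}"
  proof
    show "{i \<in> {1..<n}. \<sigma> (Suc i) < \<sigma> i} \<subseteq> Suc ` {k. Suc k < n \<and> \<sigma> (Suc (Suc k)) < \<sigma> (Suc k)}"
    proof
      fix i assume "i \<in> {i \<in> {1..<n}. \<sigma> (Suc i) < \<sigma> i}"
      then obtain k where "i = Suc k" "Suc k < n" "\<sigma> (Suc (Suc k)) < \<sigma> (Suc k)"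
        by (cases i) auto
      then show "i \<in> Suc ` {k. Suc k < n \<and> \<sigma> (Suc (Suc k)) < \<sigma> (Suc k)}" by blast
    qed
  qed auto
  ultimately show ?thesis
    by (simp add: des_def card_image)
qed

section \<open>Exponential generating functions\<close>

lemma sum_Pow_egf_mult:
  fixes f g :: "'b::field_char_0 fps"
  assumes "finite S"
  shows "(\<Sum>U\<in>Pow S. (fact (card U) * f $ card U) * (fact (card (S - U)) * g $ card (S - U))) =
         fact (card S) * (f * g) $ card S"
proof -
  let ?n = "card S"
  define h where "h k = (fact k * f $ k) * (fact (?n - k) * g $ (?n - k))" for k
  have "(\<Sum>U\<in>Pow S. (fact (card U) * f $ card U) * (fact (card (S - U)) * g $ card (S - U))) =
        (\<Sum>U\<in>Pow S. h (card U))"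
    using assms by (intro sum.cong) (auto simp: h_def card_Diff_subset finite_subset)
  also have "\<dots> = (\<Sum>k\<in>{0..?n}. \<Sum>U\<in>{U \<in> Pow S. card U = k}. h (card U))"
    using assms by (intro sum.group[symmetric]) (auto intro: card_mono)
  also have "\<dots> = (\<Sum>k\<in>{0..?n}. of_nat (?n choose k) * h k)"
  proof (rule sum.cong[OF refl])
    fix k
    have "{U \<in> Pow S. card U = k} = {U. U \<subseteq> S \<and> card U = k}" by auto
    then show "(\<Sum>U\<in>{U \<in> Pow S. card U = k}. h (card U)) = of_nat (?n choose k) * h k"
      using n_subsets[OF assms, of k] by simp
  qed
  also have "\<dots> = (\<Sum>k\<in>{0..?n}. fact ?n * (f $ k * g $ (?n - k)))"
    by (intro sum.cong) (auto simp: h_def binomial_fact)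
  also have "\<dots> = fact ?n * (f * g) $ ?n"
    by (simp add: fps_mult_nth sum_distrib_left atLeast0AtMost)
  finally show ?thesis .
qed

lemma fact_mult_fps_deriv_nth:
  fixes f :: "'b::field_char_0 fps"
  shows "fact n * fps_deriv f $ n = fact (Suc n) * f $ Suc n"
  by (simp add: fps_deriv_nth algebra_simps)

lemma egf_by_greatest_element:
  fixes \<phi> :: "'a::linorder set \<Rightarrow> 'b::field_char_0" and f g h :: "'b fps"
  assumes "finite S"
    and empty: "\<phi> {} = f $ 0"
    and deriv: "fps_deriv f = g * h"
    and step: "\<And>m S'. finite S' \<Longrightarrow> \<forall>z\<in>S'. z < m \<Longrightarrow>
                   (\<And>U. U \<subseteq> S' \<Longrightarrow> \<phi> U = fact (card U) * f $ card U) \<Longrightarrow>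
                   \<phi> (insert m S') =
                   (\<Sum>U\<in>Pow S'. (fact (card U) * g $ card U) * (fact (card (S' - U)) * h $ card (S' - U)))"
  shows "\<phi> S = fact (card S) * f $ card S"
  using assms(1)
proof (induction rule: finite_psubset_induct)
  case (psubset S)
  show ?case
  proof (cases "S = {}")
    case True
    then show ?thesis
      by (simp add: empty)
  next
    case False
    define m where "m = Max S"
    define S' where "S' = S - {m}"
    have "m \<in> S"
      using Max_in[OF psubset.hyps False] by (simp add: m_def)
    then have S: "S = insert m S'" "S' \<subset> S" "finite S'" "card S = Suc (card S')"
      using psubset.hyps card.remove[of S m] by (auto simp: S'_def)
    have "\<forall>z\<in>S'. z < m"
      using Max_ge[OF psubset.hyps] by (force simp: S'_def m_def)
    moreover have "\<phi> U = fact (card U) * f $ card U" if "U \<subseteq> S'" for U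
      using psubset.IH subset_psubset_trans[OF that S(2)] by blast
    ultimately have "\<phi> S = fact (card S') * (g * h) $ card S'"
      unfolding S(1) by (simp add: step[OF S(3)] sum_Pow_egf_mult[OF S(3)])
    also have "\<dots> = fact (card S) * f $ card S"
      unfolding deriv[symmetric] fact_mult_fps_deriv_nth S(4) ..
    finally show ?thesis .
  qed
qed

definition eulerian_egf_denom :: "real \<Rightarrow> real fps" where
  "eulerian_egf_denom x = fps_exp x - fps_const x * fps_exp 1"

definition eulerian_egf :: "real \<Rightarrow> real fps" where
  "eulerian_egf x = fps_const (1 - x) * fps_exp 1 * inverse (eulerian_egf_denom x)"

definition derangement_egf :: "real \<Rightarrow> real fps" where
  "derangement_egf x = fps_const (1 - x) * inverse (eulerian_egf_denom x)"

text \<open>\<open>step_weight x k = x + \<dots> + x\<^sup>k\<^sup>-\<^sup>1\<close> is the factor of \<open>chain_weight\<close> for a step of rank \<open>k\<close>;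
  because of truncated subtraction, \<open>step_weight x 0 = 0\<close>.\<close>

definition step_weight :: "real \<Rightarrow> nat \<Rightarrow> real" where
  "step_weight x k = x * (1 - x ^ (k - 1)) / (1 - x)"

definition step_egf :: "real \<Rightarrow> real fps" where
  "step_egf x = Abs_fps (\<lambda>k. step_weight x k / fact k)"

lemma eulerian_egf_denom_nth_0: "eulerian_egf_denom x $ 0 = 1 - x"
  by (simp add: eulerian_egf_denom_def)

lemma eulerian_egf_denom_inverse:
  assumes "x \<noteq> 1"
  shows "inverse (eulerian_egf_denom x) * (fps_exp x - fps_const x * fps_exp 1) = 1"
  using assms eulerian_egf_denom_nth_0[of x] inverse_mult_eq_1[of "eulerian_egf_denom x"]
  by (simp add: eulerian_egf_denom_def)

lemma fps_deriv_inverse_eulerian_egf_denom: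
  assumes "x \<noteq> 1"
  shows "fps_deriv (inverse (eulerian_egf_denom x)) =
           - (fps_const x * fps_exp x - fps_const x * fps_exp 1) * (inverse (eulerian_egf_denom x))\<^sup>2"
  using assms eulerian_egf_denom_nth_0[of x] fps_inverse_deriv[of "eulerian_egf_denom x"]
  by (simp add: eulerian_egf_denom_def)

lemma eulerian_egf_nth_0: "x \<noteq> 1 \<Longrightarrow> eulerian_egf x $ 0 = 1"
  by (simp add: eulerian_egf_def eulerian_egf_denom_nth_0)

lemma derangement_egf_nth_0: "x \<noteq> 1 \<Longrightarrow> derangement_egf x $ 0 = 1"
  by (simp add: derangement_egf_def eulerian_egf_denom_nth_0)

lemma fps_deriv_eulerian_egf:
  assumes "x \<noteq> 1"
  shows "fps_deriv (eulerian_egf x) = eulerian_egf x * (fps_const (1 - x) + fps_const x * eulerian_egf x)"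
proof -
  have "fps_deriv (1 - fps_const x) = (0 :: real fps)" by simp
  then show ?thesis
    using eulerian_egf_denom_inverse[OF assms] fps_deriv_inverse_eulerian_egf_denom[OF assms]
    unfolding eulerian_egf_def fps_const_sub[symmetric] fps_const_1_eq_1
    by (simp only: fps_deriv_mult fps_deriv_const fps_exp_deriv fps_const_1_eq_1) algebra
qed

lemma fps_deriv_derangement_egf:
  assumes "x \<noteq> 1"
  shows "fps_deriv (derangement_egf x) = fps_const x * (eulerian_egf x - 1) * derangement_egf x"
proof -
  have "fps_deriv (1 - fps_const x) = (0 :: real fps)" by simp
  then show ?thesis
    using eulerian_egf_denom_inverse[OF assms] fps_deriv_inverse_eulerian_egf_denom[OF assms]
    unfolding eulerian_egf_def derangement_egf_def fps_const_sub[symmetric] fps_const_1_eq_1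
    by (simp only: fps_deriv_mult fps_deriv_const fps_exp_deriv fps_const_1_eq_1) algebra
qed

lemma step_egf_eq:
  assumes "x \<noteq> 1"
  shows "step_egf x = fps_const (1 / (1 - x)) * (fps_const x * (fps_exp 1 - 1) - (fps_exp x - 1))"
proof (rule fps_ext)
  fix k
  have "1 - x \<noteq> 0" using assms by simp
  then show "step_egf x $ k = (fps_const (1 / (1 - x)) * (fps_const x * (fps_exp 1 - 1) - (fps_exp x - 1))) $ k"
    by (cases k) (simp_all add: step_egf_def step_weight_def diff_divide_distrib[symmetric] algebra_simps)
qed

lemma fact_mult_step_egf_nth: "fact k * step_egf x $ k = step_weight x k"
  by (simp add: step_egf_def)

lemma fact_mult_fps_deriv_step_egf_nth: "fact k * fps_deriv (step_egf x) $ k = step_weight x (Suc k)"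
  unfolding fact_mult_fps_deriv_nth by (simp add: step_egf_def)

lemma inverse_one_minus_fps_const:
  assumes "x \<noteq> 1"
  shows "fps_const (1 / (1 - x)) * (1 - fps_const x) = (1 :: real fps)"
proof -
  have "1 - x \<noteq> 0" using assms by simp
  then have "fps_const (1 / (1 - x)) * fps_const (1 - x) = 1"
    by simp
  then show ?thesis
    by (metis fps_const_1_eq_1 fps_const_sub)
qed

lemma derangement_egf_chain_equation:
  assumes "x \<noteq> 1"
  shows "derangement_egf x = 1 + derangement_egf x * step_egf x"
  using eulerian_egf_denom_inverse[OF assms] inverse_one_minus_fps_const[OF assms]
  unfolding derangement_egf_def step_egf_eq[OF assms] fps_const_sub[symmetric] fps_const_1_eq_1
  by algebra

lemma eulerian_egf_chain_equation:
  assumes "x \<noteq> 1"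
  shows "fps_const x * (eulerian_egf x - 1) =
           fps_deriv (step_egf x) + fps_const x * (eulerian_egf x - 1) * step_egf x"
proof -
  have "fps_deriv (step_egf x) = fps_const (1 / (1 - x)) * (fps_const x * fps_exp 1 - fps_const x * fps_exp x)"
    unfolding step_egf_eq[OF assms] by (simp add: algebra_simps)
  then show ?thesis
    using eulerian_egf_denom_inverse[OF assms] inverse_one_minus_fps_const[OF assms]
    unfolding eulerian_egf_def step_egf_eq[OF assms] fps_const_sub[symmetric] fps_const_1_eq_1
    by algebra
qed

section \<open>Eulerian polynomials of finite linear orders\<close>

definition eulerian_poly_set :: "real \<Rightarrow> 'a::linorder set \<Rightarrow> real" where
  "eulerian_poly_set x S = (\<Sum>xs\<in>permutations_of_set S. x ^ descents xs)"

lemma eulerian_poly_set_empty [simp]: "eulerian_poly_set x {} = 1"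
  by (simp add: eulerian_poly_set_def)

lemma eulerian_poly_eq_eulerian_poly_set: "eulerian_poly n x = eulerian_poly_set x {1..n}"
proof -
  have "bij_betw (\<lambda>\<sigma>. map \<sigma> [1..<Suc n]) {\<sigma>. \<sigma> permutes {1..n}} (permutations_of_set {1..n})"
    using bij_betw_map_permutes[of "[1..<Suc n]"]
    by (simp only: distinct_upt set_upt atLeastLessThanSuc_atLeastAtMost simp_thms)
  then show ?thesis
    unfolding eulerian_poly_def eulerian_poly_set_def des_eq_descents
    by (rule sum.reindex_bij_betw)
qed

lemma eulerian_poly_set_eq_ascents:
  "eulerian_poly_set x S = (\<Sum>xs\<in>permutations_of_set S. x ^ ascents xs)"
proof -
  have "(\<Sum>xs\<in>permutations_of_set S. x ^ ascents xs) = (\<Sum>xs\<in>rev ` permutations_of_set S. x ^ ascents xs)"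
    by simp
  also have "\<dots> = (\<Sum>xs\<in>permutations_of_set S. x ^ descents xs)"
    by (subst sum.reindex) (auto simp: adjacent_count_rev)
  finally show ?thesis
    by (simp add: eulerian_poly_set_def)
qed

lemma bij_betw_append_Cons_permutations_of_set:
  assumes "m \<notin> S"
  shows "bij_betw (\<lambda>(U, u, v). u @ m # v)
           (SIGMA U:Pow S. permutations_of_set U \<times> permutations_of_set (S - U))
           (permutations_of_set (insert m S))"
proof -
  let ?D = "SIGMA U:Pow S. permutations_of_set U \<times> permutations_of_set (S - U)"
  have D: "U = set u" "set v = S - set u" "distinct u" "distinct v" "m \<notin> set u" "m \<notin> set v"
    if "(U, u, v) \<in> ?D" for U u v
    using that assms by (auto dest: permutations_of_setD)
  show ?thesis
  proof (rule bij_betw_imageI)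
    show "inj_on (\<lambda>(U, u, v). u @ m # v) ?D"
    proof (rule inj_onI)
      fix p q assume "p \<in> ?D" "q \<in> ?D"
        and eq: "(\<lambda>(U, u, v). u @ m # v) p = (\<lambda>(U, u, v). u @ m # v) q"
      obtain U u v U' u' v' where p: "p = (U, u, v)" and q: "q = (U', u', v')"
        using prod_cases3 by metis
      note Dp = D[OF \<open>p \<in> ?D\<close>[unfolded p]] and Dq = D[OF \<open>q \<in> ?D\<close>[unfolded q]]
      have "u = u' \<and> v = v'"
        using eq append_Cons_eq_iff[OF Dp(5,6), of u' v'] unfolding p q by simp
      then show "p = q"
        using p q Dp(1) Dq(1) by simp
    qed
    show "(\<lambda>(U, u, v). u @ m # v) ` ?D = permutations_of_set (insert m S)"
    proof (intro equalityI subsetI)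
      fix xs assume "xs \<in> (\<lambda>(U, u, v). u @ m # v) ` ?D"
      then obtain U u v where "(U, u, v) \<in> ?D" "xs = u @ m # v"
        by auto
      with D[of U u v] show "xs \<in> permutations_of_set (insert m S)"
        by (intro permutations_of_setI) auto
    next
      fix xs assume "xs \<in> permutations_of_set (insert m S)"
      then have "distinct xs" "set xs = insert m S"
        by (auto dest: permutations_of_setD)
      moreover obtain u v where xs: "xs = u @ m # v"
        using split_list[of m xs] \<open>set xs = insert m S\<close> by auto
      ultimately have "distinct u" "distinct v" "set v = S - set u" "set u \<subseteq> S"
        using assms by auto
      then have "(set u, u, v) \<in> ?D"
        by (simp add: permutations_of_setI)
      then show "xs \<in> (\<lambda>(U, u, v). u @ m # v) ` ?D"
        unfolding xs by (rule rev_image_eqI) simp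
    qed
  qed
qed

lemma eulerian_poly_set_insert_greatest:
  assumes "finite S" and "\<forall>z\<in>S. z < m"
  shows "eulerian_poly_set x (insert m S) =
           (\<Sum>U\<in>Pow S. eulerian_poly_set x U * (if S - U = {} then 1 else x * eulerian_poly_set x (S - U)))"
proof -
  have "m \<notin> S" using assms(2) by blast
  have tail: "(\<Sum>v\<in>permutations_of_set R. x ^ descents (m # v)) = (if R = {} then 1 else x * eulerian_poly_set x R)"
    if "R \<subseteq> S" for R
  proof -
    have "descents (m # v) = 1 + descents v" if "v \<in> permutations_of_set R" "R \<noteq> {}" for v
      using that \<open>R \<subseteq> S\<close> assms(2) by (cases v) (auto simp: permutations_of_set_def adjacent_count_Cons)
    then show ?thesis
      by (auto simp: eulerian_poly_set_def sum_distrib_left intro!: sum.cong)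
  qed
  let ?D = "SIGMA U:Pow S. permutations_of_set U \<times> permutations_of_set (S - U)"
  have "eulerian_poly_set x (insert m S) = (\<Sum>p\<in>?D. x ^ descents (case p of (U, u, v) \<Rightarrow> u @ m # v))"
    unfolding eulerian_poly_set_def
    by (rule sum.reindex_bij_betw[OF bij_betw_append_Cons_permutations_of_set[OF \<open>m \<notin> S\<close>], symmetric])
  also have "\<dots> = (\<Sum>(U, u, v)\<in>?D. x ^ descents u * x ^ descents (m # v))"
  proof (rule sum.cong[OF refl])
    fix p assume "p \<in> ?D"
    obtain U u v where p: "p = (U, u, v)"
      using prod_cases3 by metis
    have "\<forall>z\<in>set u. z < m"
      using \<open>p \<in> ?D\<close> assms(2) unfolding p by (auto dest: permutations_of_setD)
    then show "x ^ descents (case p of (U, u, v) \<Rightarrow> u @ m # v) =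
               (case p of (U, u, v) \<Rightarrow> x ^ descents u * x ^ descents (m # v))"
      by (simp add: p descents_append_greatest power_add)
  qed
  also have "\<dots> = (\<Sum>U\<in>Pow S. \<Sum>(u, v)\<in>permutations_of_set U \<times> permutations_of_set (S - U).
                     x ^ descents u * x ^ descents (m # v))"
    using assms by (subst sum.Sigma) auto
  also have "\<dots> = (\<Sum>U\<in>Pow S. eulerian_poly_set x U * (\<Sum>v\<in>permutations_of_set (S - U). x ^ descents (m # v)))"
    by (simp add: eulerian_poly_set_def sum_product sum.cartesian_product)
  also have "\<dots> = (\<Sum>U\<in>Pow S. eulerian_poly_set x U * (if S - U = {} then 1 else x * eulerian_poly_set x (S - U)))"
    by (simp add: tail)
  finally show ?thesis .
qed

lemma eulerian_poly_set_eq_egf: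
  assumes "finite S" and "x \<noteq> 1"
  shows "eulerian_poly_set x S = fact (card S) * eulerian_egf x $ card S"
  using assms(1)
proof (rule egf_by_greatest_element[where g = "eulerian_egf x"])
  let ?A = "eulerian_egf x" and ?T = "fps_const (1 - x) + fps_const x * eulerian_egf x"
  show "eulerian_poly_set x {} = ?A $ 0"
    by (simp add: eulerian_egf_nth_0[OF assms(2)])
  show "fps_deriv ?A = ?A * ?T"
    by (rule fps_deriv_eulerian_egf[OF assms(2)])
  fix m S' assume S': "finite S'" "\<forall>z\<in>S'. z < m"
    and IH: "\<And>U. U \<subseteq> S' \<Longrightarrow> eulerian_poly_set x U = fact (card U) * ?A $ card U"
  have tail: "(if R = {} then 1 else x * eulerian_poly_set x R) = fact (card R) * ?T $ card R"
    if "R \<subseteq> S'" for R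
  proof (cases "R = {}")
    case True
    then show ?thesis
      by (simp add: eulerian_egf_nth_0[OF assms(2)])
  next
    case False
    then have "card R \<noteq> 0"
      using finite_subset[OF that S'(1)] by simp
    then show ?thesis
      using False by (simp add: IH[OF that])
  qed
  show "eulerian_poly_set x (insert m S') =
          (\<Sum>U\<in>Pow S'. (fact (card U) * ?A $ card U) * (fact (card (S' - U)) * ?T $ card (S' - U)))"
    unfolding eulerian_poly_set_insert_greatest[OF S']
  proof (rule sum.cong[OF refl])
    fix U assume "U \<in> Pow S'"
    then have U: "U \<subseteq> S'" "S' - U \<subseteq> S'"
      by auto
    show "eulerian_poly_set x U * (if S' - U = {} then 1 else x * eulerian_poly_set x (S' - U)) =
          (fact (card U) * ?A $ card U) * (fact (card (S' - U)) * ?T $ card (S' - U))"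
      unfolding tail[OF U(2)] IH[OF U(1)] ..
  qed
qed

section \<open>Cycles and derangements\<close>

lemma funpow_cycle_of_list_hd:
  assumes "distinct cs" and "cs \<noteq> []"
  shows "(cycle_of_list cs ^^ n) (hd cs) = cs ! (n mod length cs)"
proof -
  have "map (cycle_of_list cs ^^ n) cs ! 0 = rotate n cs ! 0"
    by (simp only: cyclic_rotation[OF assms(1)])
  then show ?thesis
    using assms(2) by (simp add: hd_conv_nth nth_rotate)
qed

lemma cycle_of_list_nth:
  assumes "distinct cs" and "i < length cs"
  shows "cycle_of_list cs (cs ! i) = rotate1 cs ! i"
proof -
  have "map (cycle_of_list cs ^^ 1) cs ! i = rotate 1 cs ! i"
    by (simp only: cyclic_rotation[OF assms(1)])
  then show ?thesis
    using assms(2) by simp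
qed

lemma cycle_of_list_neq:
  assumes "distinct cs" and "2 \<le> length cs" and "y \<in> set cs"
  shows "cycle_of_list cs y \<noteq> y"
proof -
  obtain i where i: "i < length cs" "y = cs ! i"
    using assms(3) by (auto simp: in_set_conv_nth)
  have "(Suc i) mod length cs \<noteq> i"
    using i(1) assms(2) by (cases "Suc i < length cs") (auto simp: mod_Suc)
  moreover have "0 < length cs"
    using i(1) by linarith
  then have "Suc i mod length cs < length cs"
    by (rule mod_less_divisor)
  ultimately have "cs ! (Suc i mod length cs) \<noteq> cs ! i"
    using assms(1) i(1) by (simp add: nth_eq_iff_index_eq)
  then show ?thesis
    using cycle_of_list_nth[OF assms(1) i(1)] i by (simp add: nth_rotate1)
qed

lemma funpow_eq_on_invariant:
  assumes "\<And>y. y \<in> A \<Longrightarrow> f y = g y" and "g ` A \<subseteq> A" and "y \<in> A"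
  shows "(f ^^ n) y = (g ^^ n) y"
proof -
  have "(f ^^ n) y = (g ^^ n) y \<and> (g ^^ n) y \<in> A"
    by (induction n) (use assms in auto)
  then show ?thesis ..
qed

lemma eq_if_cyclic_nth_eq:
  assumes "distinct xs" "distinct ys" "xs \<noteq> []" "ys \<noteq> []"
    and eq: "\<And>n. xs ! (n mod length xs) = ys ! (n mod length ys)"
  shows "xs = ys"
proof -
  have mod0: "length as mod length bs = 0"
    if "distinct bs" "bs \<noteq> []" "\<And>n. as ! (n mod length as) = bs ! (n mod length bs)" for as bs :: "'a list"
  proof -
    have "bs ! (length as mod length bs) = bs ! 0"
      using that(3)[of "length as"] that(3)[of 0] by simp
    then show ?thesis
      using that(1,2) by (simp add: nth_eq_iff_index_eq)
  qed
  have "length xs dvd length ys" "length ys dvd length xs"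
    using mod0[OF assms(1,3) eq[symmetric]] mod0[OF assms(2,4) eq] by (simp_all add: dvd_eq_mod_eq_0)
  then have "length xs = length ys"
    by (rule dvd_antisym)
  then show ?thesis
  proof (rule nth_equalityI)
    fix n assume "n < length xs"
    then show "xs ! n = ys ! n"
      using eq[of n] \<open>length xs = length ys\<close> by simp
  qed
qed

definition derangements :: "'a set \<Rightarrow> ('a \<Rightarrow> 'a) set" where
  "derangements S = {\<sigma>. \<sigma> permutes S \<and> (\<forall>y\<in>S. \<sigma> y \<noteq> y)}"

lemma derangements_empty [simp]: "derangements {} = {id}"
  by (auto simp: derangements_def)

lemma finite_derangements: "finite S \<Longrightarrow> finite (derangements S)"
  unfolding derangements_def by (rule finite_subset[OF _ finite_permutations]) auto

lemma cycle_of_list_compose_inside: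
  assumes "\<tau> permutes B" and "set cs \<inter> B = {}" and "y \<in> set cs"
  shows "(cycle_of_list cs \<circ> \<tau>) y = cycle_of_list cs y"
proof -
  have "y \<notin> B"
    using assms(2,3) by blast
  then show ?thesis
    by (simp add: permutes_not_in[OF assms(1)])
qed

lemma cycle_of_list_compose_outside:
  assumes "\<tau> permutes B" and "set cs \<inter> B = {}" and "y \<notin> set cs"
  shows "(cycle_of_list cs \<circ> \<tau>) y = \<tau> y"
proof -
  have "\<tau> y \<notin> set cs"
  proof (cases "y \<in> B")
    case True
    then have "\<tau> y \<in> B"
      by (simp add: permutes_in_image[OF assms(1)])
    then show ?thesis
      using assms(2) by blast
  next
    case False
    then show ?thesis
      using assms(3) by (simp add: permutes_not_in[OF assms(1)])
  qed
  then show ?thesis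
    by (simp add: id_outside_supp)
qed

lemma funpow_cycle_of_list_compose_hd:
  assumes "\<tau> permutes B" and "set cs \<inter> B = {}" and "distinct cs" and "cs \<noteq> []"
  shows "((cycle_of_list cs \<circ> \<tau>) ^^ n) (hd cs) = cs ! (n mod length cs)"
proof -
  have "((cycle_of_list cs \<circ> \<tau>) ^^ n) (hd cs) = (cycle_of_list cs ^^ n) (hd cs)"
  proof (rule funpow_eq_on_invariant)
    show "cycle_of_list cs ` set cs \<subseteq> set cs"
      by (simp add: permutes_image[OF cycle_permutes])
  qed (use assms cycle_of_list_compose_inside in auto)
  then show ?thesis
    using funpow_cycle_of_list_hd[OF assms(3,4)] by simp
qed

lemma permutes_eq_cycle_of_support_compose:
  fixes a :: 'a
  assumes "\<sigma> permutes A" and "finite A"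
  defines "\<tau> \<equiv> \<lambda>y. if y \<in> A - set (support \<sigma> a) then \<sigma> y else y"
  shows "\<tau> permutes A - set (support \<sigma> a)" and "\<sigma> = cycle_of_list (support \<sigma> a) \<circ> \<tau>"
proof -
  have perm: "permutation \<sigma>"
    using assms(1,2) by (auto simp: permutation_permutes)
  show \<tau>: "\<tau> permutes A - set (support \<sigma> a)"
    unfolding \<tau>_def by (rule semidecomposition[OF assms(1,2)])
  show "\<sigma> = cycle_of_list (support \<sigma> a) \<circ> \<tau>"
  proof
    fix y
    show "\<sigma> y = (cycle_of_list (support \<sigma> a) \<circ> \<tau>) y"
    proof (cases "y \<in> set (support \<sigma> a)")
      case True
      then show ?thesis
        using cycle_restrict[OF perm True] by (simp add: \<tau>_def)
    next
      case False
      then have "(cycle_of_list (support \<sigma> a) \<circ> \<tau>) y = \<tau> y"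
        by (intro cycle_of_list_compose_outside[OF \<tau>]) auto
      then show ?thesis
        using False permutes_not_in[OF assms(1), of y] by (auto simp: \<tau>_def)
    qed
  qed
qed

text \<open>A triple \<open>(U, l, \<tau>) \<in> cycle_splits S\<close> encodes the derangement \<open>cycle_of_list (m # l) \<circ> \<tau>\<close>
  of \<open>insert m S\<close>: the cycle through a new point \<open>m\<close>, visiting the points of \<open>U\<close> in the order \<open>l\<close>,
  together with a derangement \<open>\<tau>\<close> of the remaining points.\<close>

definition cycle_splits :: "'a set \<Rightarrow> ('a set \<times> 'a list \<times> ('a \<Rightarrow> 'a)) set" where
  "cycle_splits S = (SIGMA U:{U. U \<subseteq> S \<and> U \<noteq> {}}. permutations_of_set U \<times> derangements (S - U))"

lemma cycle_splitsD:
  assumes "(U, l, \<tau>) \<in> cycle_splits S" and "m \<notin> S"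
  shows "U \<subseteq> S" and "set l = U" and "distinct (m # l)" and "l \<noteq> []"
    and "\<tau> permutes S - U" and "\<forall>y\<in>S - U. \<tau> y \<noteq> y" and "set (m # l) \<inter> (S - U) = {}"
  using assms by (auto simp: cycle_splits_def permutations_of_set_def derangements_def)

lemma cycle_of_list_compose_in_derangements:
  assumes "(U, l, \<tau>) \<in> cycle_splits S" and "m \<notin> S"
  shows "cycle_of_list (m # l) \<circ> \<tau> \<in> derangements (insert m S)"
proof -
  note split = cycle_splitsD[OF assms]
  have "set (m # l) \<subseteq> insert m S" "2 \<le> length (m # l)"
    using split(1,2,4) by (auto simp: Suc_le_eq)
  then have "cycle_of_list (m # l) \<circ> \<tau> permutes insert m S"
    by (intro permutes_compose[OF permutes_subset[OF split(5)] permutes_subset[OF cycle_permutes]]) auto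
  moreover have "(cycle_of_list (m # l) \<circ> \<tau>) y \<noteq> y" if "y \<in> insert m S" for y
  proof (cases "y \<in> set (m # l)")
    case True
    then show ?thesis
      using cycle_of_list_neq[OF split(3) \<open>2 \<le> length (m # l)\<close> True]
        cycle_of_list_compose_inside[OF split(5,7) True] by simp
  next
    case False
    then show ?thesis
      using split(2,6) that cycle_of_list_compose_outside[OF split(5,7) False] by auto
  qed
  ultimately show ?thesis
    by (simp add: derangements_def)
qed

lemma inj_on_cycle_of_list_compose:
  assumes "m \<notin> S"
  shows "inj_on (\<lambda>(U, l, \<tau>). cycle_of_list (m # l) \<circ> \<tau>) (cycle_splits S)"
proof (rule inj_onI)
  fix p q
  assume "p \<in> cycle_splits S" and "q \<in> cycle_splits S"
    and eq: "(\<lambda>(U, l, \<tau>). cycle_of_list (m # l) \<circ> \<tau>) p = (\<lambda>(U, l, \<tau>). cycle_of_list (m # l) \<circ> \<tau>) q"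
  moreover obtain U l \<tau> U' l' \<tau>' where p: "p = (U, l, \<tau>)" and q: "q = (U', l', \<tau>')"
    using prod_cases3 by metis
  ultimately have split: "(U, l, \<tau>) \<in> cycle_splits S" and split': "(U', l', \<tau>') \<in> cycle_splits S"
    and \<sigma>: "cycle_of_list (m # l) \<circ> \<tau> = cycle_of_list (m # l') \<circ> \<tau>'"
    by auto
  note D = cycle_splitsD[OF split assms] and D' = cycle_splitsD[OF split' assms]
  have "m # l = m # l'"
  proof (rule eq_if_cyclic_nth_eq)
    fix n
    show "(m # l) ! (n mod length (m # l)) = (m # l') ! (n mod length (m # l'))"
      using funpow_cycle_of_list_compose_hd[OF D(5,7,3), of n]
        funpow_cycle_of_list_compose_hd[OF D'(5,7,3), of n] \<sigma> by simp
  qed (use D(3) D'(3) in auto)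
  then have "l = l'" "U = U'"
    using D(2) D'(2) by auto
  moreover have "\<tau> = \<tau>'"
  proof
    fix y
    show "\<tau> y = \<tau>' y"
    proof (cases "y \<in> set (m # l)")
      case True
      then have "y \<notin> S - U"
        using D(7) by auto
      then show ?thesis
        using D(5) D'(5) \<open>U = U'\<close> by (simp add: permutes_not_in)
    next
      case False
      then show ?thesis
        using \<sigma> cycle_of_list_compose_outside[OF D(5,7) False]
          cycle_of_list_compose_outside[OF D'(5,7), of y] \<open>l = l'\<close> by metis
    qed
  qed
  ultimately show "p = q"
    using p q by simp
qed

lemma derangements_subset_image_cycle_of_list_compose:
  assumes "finite S" and "m \<notin> S"
  shows "derangements (insert m S) \<subseteq> (\<lambda>(U, l, \<tau>). cycle_of_list (m # l) \<circ> \<tau>) ` cycle_splits S"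
proof
  fix \<sigma> assume "\<sigma> \<in> derangements (insert m S)"
  then have \<sigma>: "\<sigma> permutes insert m S" "\<forall>y\<in>insert m S. \<sigma> y \<noteq> y"
    by (auto simp: derangements_def)
  then have perm: "permutation \<sigma>"
    using assms(1) by (auto simp: permutation_permutes)
  define l where "l = tl (support \<sigma> m)"
  have "Suc 0 < least_power \<sigma> m"
    using least_power_gt_one[OF perm] \<sigma>(2) by simp
  then have cs: "support \<sigma> m = m # l" "l \<noteq> []"
    by (simp_all add: l_def upt_conv_Cons)
  have "distinct (m # l)" "set (m # l) \<subseteq> insert m S"
    using cycle_of_permutation[OF perm, of m] permutes_in_image[OF permutes_funpow[OF \<sigma>(1)]]
    by (auto simp flip: cs(1))
  define \<tau> where "\<tau> = (\<lambda>y. if y \<in> insert m S - set (support \<sigma> m) then \<sigma> y else y)"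
  have "finite (insert m S)"
    using assms(1) by simp
  note decomposition = permutes_eq_cycle_of_support_compose[OF \<sigma>(1) this, of m, folded \<tau>_def]
  have "insert m S - set (m # l) = S - set l"
    using \<open>distinct (m # l)\<close> assms(2) by auto
  then have "\<tau> permutes S - set l" "\<sigma> = cycle_of_list (m # l) \<circ> \<tau>"
    using decomposition unfolding cs(1) by simp_all
  moreover have "(set l, l, \<tau>) \<in> cycle_splits S"
    using \<open>\<tau> permutes S - set l\<close> \<sigma>(2) \<open>distinct (m # l)\<close> \<open>set (m # l) \<subseteq> insert m S\<close> cs(2) assms(2)
    by (auto simp: cycle_splits_def derangements_def permutations_of_set_def \<tau>_def cs(1))
  ultimately show "\<sigma> \<in> (\<lambda>(U, l, \<tau>). cycle_of_list (m # l) \<circ> \<tau>) ` cycle_splits S"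
    by (intro image_eqI[where x = "(set l, l, \<tau>)"]) auto
qed

lemma bij_betw_cycle_of_list_compose:
  assumes "finite S" and "m \<notin> S"
  shows "bij_betw (\<lambda>(U, l, \<tau>). cycle_of_list (m # l) \<circ> \<tau>) (cycle_splits S) (derangements (insert m S))"
proof -
  have "(\<lambda>(U, l, \<tau>). cycle_of_list (m # l) \<circ> \<tau>) ` cycle_splits S \<subseteq> derangements (insert m S)"
    using cycle_of_list_compose_in_derangements[OF _ assms(2)] by auto
  then show ?thesis
    unfolding bij_betw_def
    using inj_on_cycle_of_list_compose[OF assms(2)] derangements_subset_image_cycle_of_list_compose[OF assms]
    by blast
qed

lemma card_excedances_cycle_of_list:
  fixes cs :: "'a::linorder list"
  assumes "distinct cs"
  shows "card {y \<in> set cs. y < cycle_of_list cs y} = card {k. k < length cs \<and> cs ! k < rotate1 cs ! k}"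
proof -
  have "{y \<in> set cs. y < cycle_of_list cs y} = (!) cs ` {k. k < length cs \<and> cs ! k < rotate1 cs ! k}"
  proof (intro equalityI subsetI)
    fix y assume "y \<in> {y \<in> set cs. y < cycle_of_list cs y}"
    then obtain k where "k < length cs" "y = cs ! k" "y < cycle_of_list cs y"
      by (auto simp: in_set_conv_nth)
    then show "y \<in> (!) cs ` {k. k < length cs \<and> cs ! k < rotate1 cs ! k}"
      using cycle_of_list_nth[OF assms] by auto
  next
    fix y assume "y \<in> (!) cs ` {k. k < length cs \<and> cs ! k < rotate1 cs ! k}"
    then obtain k where "k < length cs" "y = cs ! k" "cs ! k < rotate1 cs ! k"
      by auto
    then show "y \<in> {y \<in> set cs. y < cycle_of_list cs y}"
      using cycle_of_list_nth[OF assms] by auto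
  qed
  moreover have "inj_on ((!) cs) {k. k < length cs \<and> cs ! k < rotate1 cs ! k}"
    by (rule inj_on_nth[OF assms]) simp
  ultimately show ?thesis
    by (simp add: card_image)
qed

lemma card_excedances_cycle_of_list_greatest:
  fixes l :: "'a::linorder list"
  assumes "distinct (m # l)" and "l \<noteq> []" and "\<forall>z\<in>set l. z < m"
  shows "card {y \<in> set (m # l). y < cycle_of_list (m # l) y} = Suc (ascents l)"
proof -
  have "l ! 0 < m" and "last l < m"
    using assms(2,3) by (simp_all add: nth_mem)
  have shift: "(m # l) ! Suc j = (l @ [m]) ! j" if "j < length l" for j
    using that by (simp add: nth_append)
  have "{k. k < length (m # l) \<and> (m # l) ! k < rotate1 (m # l) ! k} =
        Suc ` {j. Suc j < length (l @ [m]) \<and> (l @ [m]) ! j < (l @ [m]) ! Suc j}"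
  proof (intro equalityI subsetI)
    fix k assume k: "k \<in> {k. k < length (m # l) \<and> (m # l) ! k < rotate1 (m # l) ! k}"
    have "k \<noteq> 0"
    proof
      assume "k = 0"
      with k assms(2) have "m < l ! 0"
        by (simp add: nth_append)
      with \<open>l ! 0 < m\<close> show False
        by simp
    qed
    then obtain j where "k = Suc j"
      using not0_implies_Suc by blast
    with k shift show "k \<in> Suc ` {j. Suc j < length (l @ [m]) \<and> (l @ [m]) ! j < (l @ [m]) ! Suc j}"
      by auto
  next
    fix k assume "k \<in> Suc ` {j. Suc j < length (l @ [m]) \<and> (l @ [m]) ! j < (l @ [m]) ! Suc j}"
    with shift show "k \<in> {k. k < length (m # l) \<and> (m # l) ! k < rotate1 (m # l) ! k}"
      by auto
  qed
  then have "card {k. k < length (m # l) \<and> (m # l) ! k < rotate1 (m # l) ! k} =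
        card {j. Suc j < length (l @ [m]) \<and> (l @ [m]) ! j < (l @ [m]) ! Suc j}"
    by (simp add: card_image)
  also have "\<dots> = ascents (l @ [m])"
    by (simp add: adjacent_count_eq_card)
  also have "\<dots> = Suc (ascents l)"
    using \<open>last l < m\<close> assms(2) by (simp add: adjacent_count_append)
  finally show ?thesis
    by (simp only: card_excedances_cycle_of_list[OF assms(1)])
qed

lemma card_excedances_compose:
  fixes c \<tau> :: "'a::linorder \<Rightarrow> 'a"
  assumes "c permutes A" and "\<tau> permutes B" and "A \<inter> B = {}" and "finite A" and "finite B"
  shows "card {y \<in> A \<union> B. y < (c \<circ> \<tau>) y} = card {y \<in> A. y < c y} + card {y \<in> B. y < \<tau> y}"
proof -
  have "(c \<circ> \<tau>) y = c y" if "y \<in> A" for y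
  proof -
    have "y \<notin> B"
      using that assms(3) by blast
    then show ?thesis
      by (simp add: permutes_not_in[OF assms(2)])
  qed
  moreover have "(c \<circ> \<tau>) y = \<tau> y" if "y \<in> B" for y
    using that assms(3) permutes_in_image[OF assms(2)] permutes_not_in[OF assms(1)] by auto
  ultimately have "{y \<in> A \<union> B. y < (c \<circ> \<tau>) y} = {y \<in> A. y < c y} \<union> {y \<in> B. y < \<tau> y}"
    by auto
  then show ?thesis
    using assms(3-5) by (simp add: card_Un_disjoint disjoint_iff)
qed

section \<open>Derangement polynomials of finite linear orders\<close>

definition derangement_poly_set :: "real \<Rightarrow> 'a::linorder set \<Rightarrow> real" where
  "derangement_poly_set x S = (\<Sum>\<sigma>\<in>derangements S. x ^ card {y \<in> S. y < \<sigma> y})"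

lemma derangement_poly_eq_derangement_poly_set: "derangement_poly n x = derangement_poly_set x {1..n}"
  by (simp add: derangement_poly_def derangement_poly_set_def derangements_def exc_def)

lemma derangement_poly_set_empty [simp]: "derangement_poly_set x {} = 1"
  by (simp add: derangement_poly_set_def)

lemma derangement_poly_set_insert_greatest:
  assumes "finite S" and "\<forall>z\<in>S. z < m"
  shows "derangement_poly_set x (insert m S) =
           (\<Sum>U | U \<subseteq> S \<and> U \<noteq> {}. x * eulerian_poly_set x U * derangement_poly_set x (S - U))"
proof -
  have "m \<notin> S" using assms(2) by blast
  have "derangement_poly_set x (insert m S) =
          (\<Sum>p\<in>cycle_splits S. x ^ card {y \<in> insert m S. y < (case p of (U, l, \<tau>) \<Rightarrow> cycle_of_list (m # l) \<circ> \<tau>) y})"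
    unfolding derangement_poly_set_def
    by (rule sum.reindex_bij_betw[OF bij_betw_cycle_of_list_compose[OF assms(1) \<open>m \<notin> S\<close>], symmetric])
  also have "\<dots> = (\<Sum>(U, l, \<tau>)\<in>cycle_splits S. x * x ^ ascents l * x ^ card {y \<in> S - U. y < \<tau> y})"
  proof (rule sum.cong[OF refl])
    fix p assume "p \<in> cycle_splits S"
    moreover obtain U l \<tau> where p: "p = (U, l, \<tau>)"
      using prod_cases3 by metis
    ultimately have split: "(U, l, \<tau>) \<in> cycle_splits S"
      by simp
    note D = cycle_splitsD[OF split \<open>m \<notin> S\<close>]
    have "\<forall>z\<in>set l. z < m" "finite (S - U)" "set (m # l) \<union> (S - U) = insert m S"
      using assms D(1,2) by auto
    then have "card {y \<in> insert m S. y < (cycle_of_list (m # l) \<circ> \<tau>) y} =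
        Suc (ascents l) + card {y \<in> S - U. y < \<tau> y}"
      using card_excedances_compose[OF cycle_permutes D(5,7) finite_set]
        card_excedances_cycle_of_list_greatest[OF D(3,4)] by simp
    then show "x ^ card {y \<in> insert m S. y < (case p of (U, l, \<tau>) \<Rightarrow> cycle_of_list (m # l) \<circ> \<tau>) y} =
        (case p of (U, l, \<tau>) \<Rightarrow> x * x ^ ascents l * x ^ card {y \<in> S - U. y < \<tau> y})"
      unfolding p prod.case by (simp add: power_add)
  qed
  also have "\<dots> = (\<Sum>U | U \<subseteq> S \<and> U \<noteq> {}. \<Sum>(l, \<tau>)\<in>permutations_of_set U \<times> derangements (S - U).
                     x * x ^ ascents l * x ^ card {y \<in> S - U. y < \<tau> y})"
    unfolding cycle_splits_def using assms(1)
    by (subst sum.Sigma) (auto intro!: finite_cartesian_product finite_derangements)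
  also have "\<dots> = (\<Sum>U | U \<subseteq> S \<and> U \<noteq> {}.
                     (\<Sum>l\<in>permutations_of_set U. x * x ^ ascents l) * derangement_poly_set x (S - U))"
    by (simp only: derangement_poly_set_def sum_product sum.cartesian_product)
  also have "\<dots> = (\<Sum>U | U \<subseteq> S \<and> U \<noteq> {}. x * eulerian_poly_set x U * derangement_poly_set x (S - U))"
    by (simp add: eulerian_poly_set_eq_ascents sum_distrib_left)
  finally show ?thesis .
qed

lemma derangement_poly_set_eq_egf:
  assumes "finite S" and "x \<noteq> 1"
  shows "derangement_poly_set x S = fact (card S) * derangement_egf x $ card S"
  using assms(1)
proof (rule egf_by_greatest_element[where g = "fps_const x * (eulerian_egf x - 1)"])
  let ?d = "derangement_egf x" and ?C = "fps_const x * (eulerian_egf x - 1)"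
  show "derangement_poly_set x {} = ?d $ 0"
    by (simp add: derangement_egf_nth_0[OF assms(2)])
  show "fps_deriv ?d = ?C * ?d"
    by (rule fps_deriv_derangement_egf[OF assms(2)])
  fix m S' assume S': "finite S'" "\<forall>z\<in>S'. z < m"
    and IH: "\<And>U. U \<subseteq> S' \<Longrightarrow> derangement_poly_set x U = fact (card U) * ?d $ card U"
  have cycle: "x * eulerian_poly_set x U = fact (card U) * ?C $ card U" if "U \<subseteq> S'" "U \<noteq> {}" for U
  proof -
    have "finite U"
      using finite_subset[OF that(1) S'(1)] .
    with that(2) have "card U \<noteq> 0"
      by simp
    then show ?thesis
      using eulerian_poly_set_eq_egf[OF \<open>finite U\<close> assms(2)] by simp
  qed
  show "derangement_poly_set x (insert m S') =
          (\<Sum>U\<in>Pow S'. (fact (card U) * ?C $ card U) * (fact (card (S' - U)) * ?d $ card (S' - U)))"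
    unfolding derangement_poly_set_insert_greatest[OF S']
  proof (rule sum.mono_neutral_cong_left)
    show "\<forall>U\<in>Pow S' - {U. U \<subseteq> S' \<and> U \<noteq> {}}.
            (fact (card U) * ?C $ card U) * (fact (card (S' - U)) * ?d $ card (S' - U)) = 0"
      by (auto simp: eulerian_egf_nth_0[OF assms(2)])
    show "x * eulerian_poly_set x U * derangement_poly_set x (S' - U) =
          (fact (card U) * ?C $ card U) * (fact (card (S' - U)) * ?d $ card (S' - U))"
      if "U \<in> {U. U \<subseteq> S' \<and> U \<noteq> {}}" for U
      using that by (simp add: cycle IH)
  qed (use S'(1) in auto)
qed

section \<open>Sums over chains of subsets\<close>

lemma chains_to_subset:
  assumes "Fs \<in> chains_to E" and "F \<in> set Fs"
  shows "F \<subseteq> E"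
proof -
  have Fs: "Fs = butlast Fs @ [E]" "sorted_wrt (\<subset>) Fs"
    using assms(1) by (auto simp: chains_to_def)
  have "sorted_wrt (\<subset>) (butlast Fs @ [E])"
    using Fs(2) by (subst (asm) Fs(1))
  then have "\<forall>G\<in>set (butlast Fs). G \<subset> E"
    by (simp add: sorted_wrt_append)
  moreover have "F \<in> set (butlast Fs @ [E])"
    using assms(2) by (subst (asm) Fs(1))
  ultimately show ?thesis
    by auto
qed

lemma finite_chains_to:
  assumes "finite E"
  shows "finite (chains_to E)"
proof (rule finite_subset)
  have "distinct Fs" if "sorted_wrt (\<subset>) Fs" for Fs :: "'a set list"
    using that by (induction Fs) auto
  then show "chains_to E \<subseteq> {Fs. set Fs \<subseteq> Pow E \<and> distinct Fs}"
    using chains_to_subset by (fastforce simp: chains_to_def)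
  show "finite {Fs. set Fs \<subseteq> Pow E \<and> distinct Fs}"
    using assms by (simp add: finite_subset_distinct)
qed

lemma snoc_in_chains_to_iff:
  assumes "Gs \<noteq> []"
  shows "Gs @ [E] \<in> chains_to E \<longleftrightarrow> Gs \<in> chains_to (last Gs) \<and> last Gs \<subset> E"
proof
  assume "Gs @ [E] \<in> chains_to E"
  then show "Gs \<in> chains_to (last Gs) \<and> last Gs \<subset> E"
    using assms by (auto simp: chains_to_def sorted_wrt_append)
next
  assume *: "Gs \<in> chains_to (last Gs) \<and> last Gs \<subset> E"
  then have "\<forall>G\<in>set Gs. G \<subset> E"
    using chains_to_subset by blast
  with * show "Gs @ [E] \<in> chains_to E"
    by (simp add: chains_to_def sorted_wrt_append)
qed

lemma bij_betw_snoc_chains_to: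
  "bij_betw (\<lambda>(G, Gs). Gs @ [E]) (SIGMA G:{G. G \<subset> E}. chains_to G) (chains_to E - {[E]})"
proof (rule bij_betw_imageI)
  show "inj_on (\<lambda>(G, Gs). Gs @ [E]) (SIGMA G:{G. G \<subset> E}. chains_to G)"
    by (auto simp: inj_on_def chains_to_def)
  show "(\<lambda>(G, Gs). Gs @ [E]) ` (SIGMA G:{G. G \<subset> E}. chains_to G) = chains_to E - {[E]}"
  proof (intro equalityI subsetI)
    fix Fs assume "Fs \<in> (\<lambda>(G, Gs). Gs @ [E]) ` (SIGMA G:{G. G \<subset> E}. chains_to G)"
    then obtain G Gs where "G \<subset> E" "Gs \<in> chains_to G" "Fs = Gs @ [E]"
      by auto
    moreover have "Gs \<noteq> []" "last Gs = G"
      using \<open>Gs \<in> chains_to G\<close> by (auto simp: chains_to_def)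
    ultimately show "Fs \<in> chains_to E - {[E]}"
      using snoc_in_chains_to_iff by auto
  next
    fix Fs assume Fs: "Fs \<in> chains_to E - {[E]}"
    define Gs where "Gs = butlast Fs"
    have Fs_eq: "Fs = Gs @ [E]"
      using Fs by (auto simp: chains_to_def Gs_def)
    moreover have "Gs \<noteq> []"
      using Fs Fs_eq by auto
    ultimately have "Gs \<in> chains_to (last Gs)" "last Gs \<subset> E"
      using snoc_in_chains_to_iff[of Gs E] Fs by auto
    then have "(last Gs, Gs) \<in> (SIGMA G:{G. G \<subset> E}. chains_to G)"
      by simp
    then show "Fs \<in> (\<lambda>(G, Gs). Gs @ [E]) ` (SIGMA G:{G. G \<subset> E}. chains_to G)"
      unfolding Fs_eq by (rule rev_image_eqI) simp
  qed
qed

lemma sum_chains_to_snoc: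
  assumes "finite E"
  shows "(\<Sum>Fs\<in>chains_to E. h Fs) = h [E] + (\<Sum>G | G \<subset> E. \<Sum>Gs\<in>chains_to G. h (Gs @ [E]))"
proof -
  have "[E] \<in> chains_to E"
    by (simp add: chains_to_def)
  then have "(\<Sum>Fs\<in>chains_to E. h Fs) = h [E] + (\<Sum>Fs\<in>chains_to E - {[E]}. h Fs)"
    by (rule sum.remove[OF finite_chains_to[OF assms]])
  also have "(\<Sum>Fs\<in>chains_to E - {[E]}. h Fs) =
             (\<Sum>p\<in>(SIGMA G:{G. G \<subset> E}. chains_to G). h (case p of (G, Gs) \<Rightarrow> Gs @ [E]))"
    by (rule sum.reindex_bij_betw[OF bij_betw_snoc_chains_to, symmetric])
  also have "\<dots> = (\<Sum>G | G \<subset> E. \<Sum>Gs\<in>chains_to G. h (Gs @ [E]))"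
  proof -
    have "{G. G \<subset> E} \<subseteq> Pow E"
      by auto
    then have "finite {G. G \<subset> E}"
      using assms by (simp add: finite_subset)
    moreover have "\<forall>G\<in>{G. G \<subset> E}. finite (chains_to G)"
    proof
      fix G assume "G \<in> {G. G \<subset> E}"
      then have "finite G"
        using finite_subset[of G E] assms by auto
      then show "finite (chains_to G)"
        by (rule finite_chains_to)
    qed
    ultimately show ?thesis
      by (subst sum.Sigma) (simp_all add: prod.case_distrib)
  qed
  finally show ?thesis .
qed

lemma chain_weight_singleton [simp]: "chain_weight x [E] = 1"
  by (simp add: chain_weight_def)

lemma chain_weight_snoc:
  assumes "Gs \<noteq> []"
  shows "chain_weight x (Gs @ [E]) = chain_weight x Gs * step_weight x (card E - card (last Gs))"
proof -
  define t where "t Fs i = x * (1 - x ^ (card (Fs ! i) - card (Fs ! (i - 1)) - 1)) / (1 - x)"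
    for Fs :: "'a set list" and i
  have "{1..length Gs} = insert (length Gs) {1..length Gs - 1}"
    using assms by (cases Gs) auto
  have "chain_weight x (Gs @ [E]) = (\<Prod>i\<in>{1..length Gs}. t (Gs @ [E]) i)"
    by (simp add: chain_weight_def t_def)
  also have "\<dots> = t (Gs @ [E]) (length Gs) * (\<Prod>i\<in>{1..length Gs - 1}. t (Gs @ [E]) i)"
    unfolding \<open>{1..length Gs} = insert (length Gs) {1..length Gs - 1}\<close> by (rule prod.insert) auto
  also have "(\<Prod>i\<in>{1..length Gs - 1}. t (Gs @ [E]) i) = (\<Prod>i\<in>{1..length Gs - 1}. t Gs i)"
  proof (rule prod.cong[OF refl])
    fix i assume "i \<in> {1..length Gs - 1}"
    then have "i < length Gs" "i - 1 < length Gs"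
      using assms by auto
    then show "t (Gs @ [E]) i = t Gs i"
      by (simp add: t_def nth_append)
  qed
  also have "\<dots> = chain_weight x Gs"
    by (simp add: chain_weight_def t_def)
  also have "t (Gs @ [E]) (length Gs) = step_weight x (card E - card (last Gs))"
    using assms by (simp add: t_def step_weight_def nth_append last_conv_nth)
  finally show ?thesis
    by simp
qed

lemma sum_chains_to_snoc_chain_weight:
  "(\<Sum>Gs\<in>chains_to G. a (hd (Gs @ [E])) * chain_weight x (Gs @ [E])) =
   (\<Sum>Gs\<in>chains_to G. a (hd Gs) * chain_weight x Gs) * step_weight x (card E - card G)"
  unfolding sum_distrib_right
  by (rule sum.cong) (auto simp: chains_to_def chain_weight_snoc mult.assoc)

lemma sum_chains_to_egf:
  fixes A T :: "real fps"
  assumes "finite E" and T: "T = A + T * step_egf x"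
  shows "(\<Sum>Fs\<in>chains_to E. fact (card (hd Fs)) * A $ card (hd Fs) * chain_weight x Fs) =
         fact (card E) * T $ card E"
  using assms(1)
proof (induction rule: finite_psubset_induct)
  case (psubset E)
  let ?F = "step_egf x"
  have IH: "(\<Sum>Gs\<in>chains_to G. fact (card (hd (Gs @ [E]))) * A $ card (hd (Gs @ [E])) * chain_weight x (Gs @ [E])) =
            (fact (card G) * T $ card G) * (fact (card (E - G)) * ?F $ card (E - G))"
    if "G \<subset> E" for G
  proof -
    have "card (E - G) = card E - card G"
      using that psubset.hyps by (auto simp: card_Diff_subset finite_subset)
    then show ?thesis
      using sum_chains_to_snoc_chain_weight[where a = "\<lambda>F. fact (card F) * A $ card F" and G = G] psubset.IH[OF that]
      by (simp add: fact_mult_step_egf_nth)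
  qed
  have "(\<Sum>Fs\<in>chains_to E. fact (card (hd Fs)) * A $ card (hd Fs) * chain_weight x Fs) =
        fact (card E) * A $ card E +
        (\<Sum>G | G \<subset> E. (fact (card G) * T $ card G) * (fact (card (E - G)) * ?F $ card (E - G)))"
    by (simp add: sum_chains_to_snoc[OF psubset.hyps] IH)
  also have "(\<Sum>G | G \<subset> E. (fact (card G) * T $ card G) * (fact (card (E - G)) * ?F $ card (E - G))) =
             (\<Sum>G\<in>Pow E. (fact (card G) * T $ card G) * (fact (card (E - G)) * ?F $ card (E - G)))"
  proof (rule sum.mono_neutral_left)
    have "?F $ 0 = 0"
      by (simp add: step_egf_def step_weight_def)
    then show "\<forall>G\<in>Pow E - {G. G \<subset> E}. (fact (card G) * T $ card G) * (fact (card (E - G)) * ?F $ card (E - G)) = 0"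
      by auto
  qed (use psubset.hyps in auto)
  also have "\<dots> = fact (card E) * (T * ?F) $ card E"
    by (rule sum_Pow_egf_mult[OF psubset.hyps])
  also have "fact (card E) * A $ card E + fact (card E) * (T * ?F) $ card E = fact (card E) * T $ card E"
    using arg_cong[where f = "\<lambda>f. f $ card E", OF T] by (simp add: distrib_left)
  finally show ?case .
qed

lemma card_hd_chains_to_eq_0_iff:
  assumes "Fs \<in> chains_to E" and "finite E" and "E \<noteq> {}"
  shows "2 \<le> length Fs \<and> hd Fs = {} \<longleftrightarrow> card (hd Fs) = 0"
proof -
  have "Fs \<noteq> []" "last Fs = E"
    using assms(1) by (auto simp: chains_to_def)
  have "hd Fs \<subseteq> E"
    using chains_to_subset[OF assms(1) hd_in_set[OF \<open>Fs \<noteq> []\<close>]] .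
  moreover have "2 \<le> length Fs" if "hd Fs = {}"
  proof (rule ccontr)
    assume "\<not> 2 \<le> length Fs"
    moreover have "length Fs \<noteq> 0"
      using \<open>Fs \<noteq> []\<close> by simp
    ultimately have "length Fs = 1"
      by linarith
    then have "Fs = [hd Fs]"
      by (cases Fs) auto
    then have "hd Fs = E"
      using \<open>last Fs = E\<close> by (metis last_ConsL)
    with that assms(3) show False
      by simp
  qed
  moreover have "finite (hd Fs)"
    using \<open>hd Fs \<subseteq> E\<close> assms(2) by (rule finite_subset)
  ultimately show ?thesis
    using \<open>hd Fs \<subseteq> E\<close> by auto
qed

lemma derangement_chain_sum_eq_egf:
  assumes "finite E" and "E \<noteq> {}" and "x \<noteq> 1"
  shows "(\<Sum>Fs \<in> {Fs \<in> chains_to E. length Fs \<ge> 2 \<and> hd Fs = {}}. chain_weight x Fs) =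
         fact (card E) * derangement_egf x $ card E"
proof -
  have "{Fs \<in> chains_to E. length Fs \<ge> 2 \<and> hd Fs = {}} = {Fs \<in> chains_to E. card (hd Fs) = 0}"
    using card_hd_chains_to_eq_0_iff[OF _ assms(1,2)] by blast
  then have "(\<Sum>Fs \<in> {Fs \<in> chains_to E. length Fs \<ge> 2 \<and> hd Fs = {}}. chain_weight x Fs) =
             (\<Sum>Fs\<in>chains_to E. if card (hd Fs) = 0 then chain_weight x Fs else 0)"
    by (simp add: sum.inter_filter[OF finite_chains_to[OF assms(1)]])
  also have "\<dots> = (\<Sum>Fs\<in>chains_to E. fact (card (hd Fs)) * 1 $ card (hd Fs) * chain_weight x Fs)"
    by (rule sum.cong) auto
  also have "\<dots> = fact (card E) * derangement_egf x $ card E"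
    by (rule sum_chains_to_egf[OF assms(1) derangement_egf_chain_equation[OF assms(3)]])
  finally show ?thesis .
qed

lemma eulerian_chain_sum_eq_egf:
  assumes "finite E" and "x \<noteq> 1"
  shows "(\<Sum>Fs \<in> chains_to E. x * (1 - x ^ card (hd Fs)) / (1 - x) * chain_weight x Fs) =
         fact (card E) * (fps_const x * (eulerian_egf x - 1)) $ card E"
proof -
  have "(\<Sum>Fs \<in> chains_to E. x * (1 - x ^ card (hd Fs)) / (1 - x) * chain_weight x Fs) =
        (\<Sum>Fs\<in>chains_to E. fact (card (hd Fs)) * fps_deriv (step_egf x) $ card (hd Fs) * chain_weight x Fs)"
    by (simp only: fact_mult_fps_deriv_step_egf_nth) (simp add: step_weight_def)
  also have "\<dots> = fact (card E) * (fps_const x * (eulerian_egf x - 1)) $ card E"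
    by (rule sum_chains_to_egf[OF assms(1) eulerian_egf_chain_equation[OF assms(2)]])
  finally show ?thesis .
qed

theorem lemma3p20:
  fixes E :: "'a set" and n :: nat and x :: real
  assumes "finite E" and "card E = n" and "n \<ge> 1" and "x \<noteq> 1"
  shows "(derangement_poly n x =
           (\<Sum>Fs \<in> {Fs \<in> chains_to E. length Fs \<ge> 2 \<and> hd Fs = {}}. chain_weight x Fs)) \<and>
         (x * eulerian_poly n x =
           (\<Sum>Fs \<in> chains_to E.
              x * (1 - x ^ card (hd Fs)) / (1 - x) * chain_weight x Fs))"
proof
  have "E \<noteq> {}"
    using assms(1-3) by auto
  then show "derangement_poly n x =
      (\<Sum>Fs \<in> {Fs \<in> chains_to E. length Fs \<ge> 2 \<and> hd Fs = {}}. chain_weight x Fs)"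
    using derangement_chain_sum_eq_egf[OF assms(1) _ assms(4)] assms(2)
    by (simp add: derangement_poly_eq_derangement_poly_set derangement_poly_set_eq_egf[OF _ assms(4)])
  show "x * eulerian_poly n x =
      (\<Sum>Fs \<in> chains_to E. x * (1 - x ^ card (hd Fs)) / (1 - x) * chain_weight x Fs)"
    using eulerian_chain_sum_eq_egf[OF assms(1,4)] assms(2,3)
    by (simp add: eulerian_poly_eq_eulerian_poly_set eulerian_poly_set_eq_egf[OF _ assms(4)])
qed

end
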